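(* Let $m,n\geq 1$ be integers and set $k_0:=n$. Then, as an identity of rational functions in $x$, \[ \sum_{k=1}^{n}\binom{n}{k}\frac{(m-x)_k(x-1)_{n-k}}{(x-m)_{m+n-1}k^m} =\sum_{1\leq k_{m-1}\leq\cdots\leq k_1\leq n}\frac{\sum_{j=1}^{k_{m-1}-1}\frac{1}{x+j-m}-\sum_{j=1}^{k_{m-1}}\frac{1}{j}}{k_1k_2\cdots k_{m-1} (x+k_1-2)(x+k_2-3)\cdots(x+k_{m-1}-m)}, \] where for $m=1$ the outer sum is the single term with empty products equal to $1$ and $k_0=n$.
   Context: $(x)_N=x(x+1)\cdots(x+N-1)$ denotes the rising factorial, with $(x)_0=1$. *)

theory Defs
  imports Complex_Main
begin

text \<open>Index tuples for the outer sum: n = k_0 >= k_1 >= ... >= k_(m-1) >= 1,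
  encoded as functions k with k 0 = n and k i = 0 for i >= m.\<close>
definition chains :: "nat \<Rightarrow> nat \<Rightarrow> (nat \<Rightarrow> nat) set" where
  "chains m n = {k. k 0 = n \<and> (\<forall>i. m \<le> i \<longrightarrow> k i = 0)
      \<and> (\<forall>i\<in>{1..<m}. 1 \<le> k i) \<and> (\<forall>i. Suc i < m \<longrightarrow> k (Suc i) \<le> k i)}"

end

theory Submission
  imports Defs
begin

text \<open>Write L_m(n, x) for the left-hand side and R_m(n, x) for the right-hand side. Both
  satisfy the recursion F_(m+1)(n, x) = sum_(k=1..n) F_m(k, x - 1) / (k (x + k - 2)). For R this
  is peeling off the first index k_1 of the chain. For L, expand L_m(k, x - 1), interchange the
  two summations and evaluate the inner sum over k by telescoping. The same recursion reduces
  m = 1 to m = 0, where the Chu-Vandermonde identity for rising factorials gives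
  L_0(k, x - 1) = 2 - x for k >= 2; summing the resulting terms gives the difference of
  harmonic-type sums that is R_1.\<close>

definition binomial_pochhammer_sum :: "nat \<Rightarrow> nat \<Rightarrow> real \<Rightarrow> real" where
  "binomial_pochhammer_sum m n x =
    (\<Sum>k=1..n. real (n choose k) * pochhammer (real m - x) k * pochhammer (x - 1) (n - k)
      / (pochhammer (x - real m) (m + n - 1) * real k ^ m))"

lemma sum_triangle_swap:
  fixes f :: "nat \<Rightarrow> nat \<Rightarrow> 'a::comm_monoid_add"
  shows "(\<Sum>k=1..n. \<Sum>j=1..k. f k j) = (\<Sum>j=1..n. \<Sum>k=j..n. f k j)"
  by (induction n) (auto simp: sum.distrib)

lemma binomial_pochhammer_telescope:
  fixes z :: real
  assumes "1 \<le> j" "j \<le> n" and "pochhammer (z - real m) (m + n) \<noteq> 0"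
  shows "(\<Sum>k=j..n. real (k choose j) * pochhammer (z - 1) (k - j)
            / (pochhammer (z - real m) (m + k) * real k))
       = real (n choose j) * pochhammer z (n - j) / (real j * pochhammer (z - real m) (m + n))"
  using assms(2,3)
proof (induction n rule: dec_induct)
  case base
  then show ?case by simp
next
  case (step n)
  define P where "P = pochhammer (z - real m) (m + n)"
  define d where "d = n - j"
  define Q where "Q = pochhammer z d"
  have n: "n = j + d" and Suc_n: "Suc n - j = Suc d" using step.hyps by (simp_all add: d_def)
  have P_Suc: "pochhammer (z - real m) (Suc (m + n)) = P * (z + real n)"
    by (simp add: P_def pochhammer_Suc)
  have "P * (z + real n) \<noteq> 0" using step.prems P_Suc by simp
  then have P: "P \<noteq> 0" and zn: "z + real n \<noteq> 0" by auto
  have binom: "real (n choose j) * (real n + 1) = real (Suc n choose j) * (real d + 1)"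
    using binomial_absorb_comp[of "Suc n" j] n by (simp flip: of_nat_mult add: algebra_simps)
  have poch_Suc: "pochhammer (z - 1) (Suc n - j) = (z - 1) * Q"
    by (simp add: Q_def Suc_n pochhammer_rec)
  have IH: "(\<Sum>k=j..n. real (k choose j) * pochhammer (z - 1) (k - j)
            / (pochhammer (z - real m) (m + k) * real k)) = real (n choose j) * Q / (real j * P)"
    using step.IH pochhammer_neq_0_mono[OF step.prems] by (simp add: P_def Q_def d_def)
  have "(\<Sum>k=j..Suc n. real (k choose j) * pochhammer (z - 1) (k - j)
            / (pochhammer (z - real m) (m + k) * real k))
      = real (n choose j) * Q / (real j * P)
        + real (Suc n choose j) * ((z - 1) * Q) / (P * (z + real n) * (real n + 1))"
    using step.hyps by (simp add: IH P_Suc poch_Suc d_def)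
  also have "\<dots> = real (Suc n choose j) * (Q * (z + real d)) / (real j * (P * (z + real n)))"
  proof -
    have key: "real (n choose j) * (z + real n) * (real n + 1) + real (Suc n choose j) * (z - 1) * real j
        = real (Suc n choose j) * (z + real d) * (real n + 1)"
      unfolding n using binom[unfolded n] by (simp add: algebra_simps)
    have common_denominator: "a * Q / (u * P) + b * (y * Q) / (P * v * w) = (a * v * w + b * y * u) * Q / (u * P * v * w)"
      if "u \<noteq> 0" "v \<noteq> 0" "w \<noteq> 0" for a b u v w y :: real
      using that P by (simp add: field_simps)
    have j: "real j \<noteq> 0" and n1: "real n + 1 \<noteq> 0" using assms(1) by auto
    have "real (n choose j) * Q / (real j * P)
        + real (Suc n choose j) * ((z - 1) * Q) / (P * (z + real n) * (real n + 1))
        = real (Suc n choose j) * (z + real d) * (real n + 1) * Q / (real j * P * (z + real n) * (real n + 1))"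
      unfolding common_denominator[OF j zn n1] key ..
    also have "\<dots> = real (Suc n choose j) * (Q * (z + real d)) / (real j * (P * (z + real n)))"
      using n1 by (simp add: ac_simps)
    finally show ?thesis .
  qed
  also have "\<dots> = real (Suc n choose j) * pochhammer z (Suc n - j)
      / (real j * pochhammer (z - real m) (m + Suc n))"
    by (simp add: P_Suc P_def Q_def Suc_n pochhammer_Suc)
  finally show ?case .
qed

lemma binomial_pochhammer_sum_Suc:
  fixes x :: real
  assumes nz: "pochhammer (x - real (Suc m)) (m + n) \<noteq> 0"
  shows "binomial_pochhammer_sum (Suc m) n x
       = (\<Sum>k=1..n. binomial_pochhammer_sum m k (x - 1) / (real k * (x + real k - 2)))"
proof -
  let ?g = "\<lambda>k j. pochhammer (real (Suc m) - x) j / real j ^ m *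
     (real (k choose j) * pochhammer (x - 2) (k - j) / (pochhammer (x - real (Suc m)) (m + k) * real k))"
  have inner: "binomial_pochhammer_sum m k (x - 1) / (real k * (x + real k - 2)) = (\<Sum>j=1..k. ?g k j)"
    if k: "1 \<le> k" for k
  proof -
    obtain l where l: "k = Suc l" using k by (cases k) auto
    have poch: "pochhammer (x - 1 - real m) (m + k - 1) * (x + real k - 2)
        = pochhammer (x - real (Suc m)) (m + k)"
      by (simp add: l pochhammer_Suc algebra_simps)
    have "real m - (x - 1) = real (Suc m) - x" "x - 1 - 1 = x - 2" by simp_all
    then show ?thesis
      unfolding binomial_pochhammer_sum_def sum_divide_distrib
      by (intro sum.cong refl) (simp only: flip: poch, argo)
  qed
  have "(\<Sum>k=1..n. binomial_pochhammer_sum m k (x - 1) / (real k * (x + real k - 2)))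
      = (\<Sum>k=1..n. \<Sum>j=1..k. ?g k j)"
    by (intro sum.cong refl inner) simp
  also have "\<dots> = (\<Sum>j=1..n. pochhammer (real (Suc m) - x) j / real j ^ m *
      (\<Sum>k=j..n. real (k choose j) * pochhammer (x - 2) (k - j)
         / (pochhammer (x - real (Suc m)) (m + k) * real k)))"
    by (simp only: sum_triangle_swap sum_distrib_left)
  also have "\<dots> = (\<Sum>j=1..n. pochhammer (real (Suc m) - x) j / real j ^ m *
      (real (n choose j) * pochhammer (x - 1) (n - j) / (real j * pochhammer (x - real (Suc m)) (m + n))))"
    using binomial_pochhammer_telescope[of _ n "x - 1" m] nz
    by (intro sum.cong refl) (simp add: algebra_simps)
  also have "\<dots> = binomial_pochhammer_sum (Suc m) n x"
    unfolding binomial_pochhammer_sum_def by (intro sum.cong refl) (simp add: ac_simps)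
  finally show ?thesis ..
qed

lemma binomial_pochhammer_sum_0:
  fixes y :: real
  assumes "1 \<le> k"
  shows "binomial_pochhammer_sum 0 k y = (pochhammer (-1) k - pochhammer (y - 1) k) / pochhammer y (k - 1)"
proof -
  have "pochhammer (-1) k = pochhammer (- y + (y - 1)) k" by simp
  also have "\<dots> = (\<Sum>j\<le>k. real (k choose j) * pochhammer (- y) j * pochhammer (y - 1) (k - j))"
    by (rule pochhammer_binomial_sum)
  also have "\<dots> = pochhammer (y - 1) k
      + (\<Sum>j=1..k. real (k choose j) * pochhammer (- y) j * pochhammer (y - 1) (k - j))"
    by (simp add: atMost_atLeast0 sum.atLeast_Suc_atMost)
  finally show ?thesis
    unfolding binomial_pochhammer_sum_def by (simp add: sum_divide_distrib)
qed

lemma binomial_pochhammer_sum_0_term: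
  fixes x :: real
  assumes "1 \<le> k" and nz: "pochhammer (x - 1) k \<noteq> 0"
  shows "binomial_pochhammer_sum 0 k (x - 1) / (real k * (x + real k - 2))
       = (if k = 1 then -1 else 1 / (x + real k - 2) - 1 / real k)"
proof (cases "k = 1")
  case True
  with nz show ?thesis by (simp add: binomial_pochhammer_sum_def field_simps)
next
  case False
  then obtain l where k: "k = Suc (Suc l)" using assms(1) by (cases k; cases "k - 1") auto
  have "pochhammer (x - 1) (Suc l) * (x + real l) \<noteq> 0"
    using nz by (simp add: k pochhammer_Suc)
  then have poch: "pochhammer (x - 1) (Suc l) \<noteq> 0" and xk: "x + real k - 2 \<noteq> 0"
    by (auto simp: k)
  have "binomial_pochhammer_sum 0 k (x - 1) = - (x - 2)"
    using poch by (simp add: binomial_pochhammer_sum_0 k pochhammer_rec pochhammer_0_left)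
  then show ?thesis using False xk by (simp add: k field_simps)
qed

lemma binomial_pochhammer_sum_1:
  fixes x :: real
  assumes "1 \<le> n" and nz: "pochhammer (x - 1) n \<noteq> 0"
  shows "binomial_pochhammer_sum 1 n x = (\<Sum>j=1..<n. 1 / (x + real j - 1)) - (\<Sum>j=1..n. 1 / real j)"
proof -
  have "binomial_pochhammer_sum 1 n x
      = (\<Sum>k=1..n. if k = 1 then -1 else 1 / (x + real k - 2) - 1 / real k)"
    using nz pochhammer_neq_0_mono[OF nz]
    by (simp add: binomial_pochhammer_sum_Suc binomial_pochhammer_sum_0_term)
  also have "\<dots> = (\<Sum>j=1..<n. 1 / (x + real j - 1)) - (\<Sum>j=1..n. 1 / real j)"
    using assms(1) by (induction n rule: dec_induct) (simp_all add: algebra_simps)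
  finally show ?thesis .
qed

definition chain_term :: "nat \<Rightarrow> real \<Rightarrow> (nat \<Rightarrow> nat) \<Rightarrow> real" where
  "chain_term m x k =
    ((\<Sum>j=1..<k (m - 1). 1 / (x + real j - real m)) - (\<Sum>j=1..k (m - 1). 1 / real j))
      / (\<Prod>i=1..<m. real (k i) * (x + real (k i) - real (i + 1)))"

definition chain_sum :: "nat \<Rightarrow> nat \<Rightarrow> real \<Rightarrow> real" where
  "chain_sum m n x = (\<Sum>k\<in>chains m n. chain_term m x k)"

lemma chains_le:
  assumes "k \<in> chains m n"
  shows "k i \<le> n"
proof (induction i)
  case 0
  then show ?case using assms by (simp add: chains_def)
next
  case (Suc i)
  then show ?case using assms by (cases "Suc i < m") (auto simp: chains_def)
qed

lemma finite_chains: "finite (chains m n)"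
proof -
  let ?extend = "\<lambda>xs i. if i < m then xs ! i else 0"
  have "chains m n \<subseteq> ?extend ` {xs. set xs \<subseteq> {..n} \<and> length xs = m}"
  proof
    fix k assume k: "k \<in> chains m n"
    then have "k = ?extend (map k [0..<m])" by (auto simp: chains_def)
    moreover have "set (map k [0..<m]) \<subseteq> {..n}" using chains_le[OF k] by auto
    ultimately show "k \<in> ?extend ` {xs. set xs \<subseteq> {..n} \<and> length xs = m}" by force
  qed
  moreover have "finite {xs. set xs \<subseteq> {..n} \<and> length xs = m}"
    by (rule finite_lists_length_eq) simp
  ultimately show ?thesis by (rule finite_subset[OF _ finite_imageI])
qed

lemma chain_sum_1: "chain_sum 1 n x = (\<Sum>j=1..<n. 1 / (x + real j - 1)) - (\<Sum>j=1..n. 1 / real j)"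
proof -
  have "chains 1 n = {\<lambda>i. if i = 0 then n else 0}" by (auto simp: chains_def)
  then show ?thesis by (simp add: chain_sum_def chain_term_def)
qed

lemma chain_term_case_nat:
  "chain_term (Suc (Suc m)) x (case_nat n k)
     = chain_term (Suc m) (x - 1) k / (real (k 0) * (x + real (k 0) - 2))"
proof -
  have "(\<Prod>i=1..<Suc (Suc m). real (case_nat n k i) * (x + real (case_nat n k i) - real (i + 1)))
      = real (k 0) * (x + real (k 0) - 2)
        * (\<Prod>i=Suc 1..<Suc (Suc m). real (case_nat n k i) * (x + real (case_nat n k i) - real (i + 1)))"
    by (subst prod.atLeast_Suc_lessThan) auto
  also have "(\<Prod>i=Suc 1..<Suc (Suc m). real (case_nat n k i) * (x + real (case_nat n k i) - real (i + 1)))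
      = (\<Prod>i=1..<Suc m. real (k i) * (x - 1 + real (k i) - real (i + 1)))"
    by (subst prod.shift_bounds_Suc_ivl) (simp add: algebra_simps)
  finally show ?thesis
    by (simp add: chain_term_def algebra_simps)
qed

lemma bij_betw_case_nat_chains:
  "bij_betw (\<lambda>(k1, k). case_nat n k)
     (SIGMA k1:{1..n}. chains (Suc m) k1) (chains (Suc (Suc m)) n)"
proof (rule bij_betw_byWitness[where f' = "\<lambda>k. (k 1, k \<circ> Suc)"])
  show "\<forall>a\<in>SIGMA k1:{1..n}. chains (Suc m) k1. (\<lambda>k. (k 1, k \<circ> Suc)) ((\<lambda>(k1, k). case_nat n k) a) = a"
    by (auto simp: chains_def)
  show "\<forall>k\<in>chains (Suc (Suc m)) n. (\<lambda>(k1, k). case_nat n k) (k 1, k \<circ> Suc) = k"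
    by (auto simp: chains_def fun_eq_iff split: nat.split)
  show "(\<lambda>(k1, k). case_nat n k) ` (SIGMA k1:{1..n}. chains (Suc m) k1) \<subseteq> chains (Suc (Suc m)) n"
    by (auto simp: chains_def less_Suc_eq_0_disj split: nat.split)
  show "(\<lambda>k. (k 1, k \<circ> Suc)) ` chains (Suc (Suc m)) n \<subseteq> (SIGMA k1:{1..n}. chains (Suc m) k1)"
    using chains_le by (fastforce simp: chains_def)
qed

lemma chain_sum_Suc:
  "chain_sum (Suc (Suc m)) n x
     = (\<Sum>k1=1..n. chain_sum (Suc m) k1 (x - 1) / (real k1 * (x + real k1 - 2)))"
proof -
  have "(\<Sum>k1=1..n. chain_sum (Suc m) k1 (x - 1) / (real k1 * (x + real k1 - 2)))
      = (\<Sum>(k1, k)\<in>(SIGMA k1:{1..n}. chains (Suc m) k1).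
           chain_term (Suc m) (x - 1) k / (real k1 * (x + real k1 - 2)))"
    by (simp add: chain_sum_def sum_divide_distrib sum.Sigma finite_chains)
  also have "\<dots> = (\<Sum>(k1, k)\<in>(SIGMA k1:{1..n}. chains (Suc m) k1). chain_term (Suc (Suc m)) x (case_nat n k))"
    by (intro sum.cong refl) (auto simp: chain_term_case_nat chains_def)
  also have "\<dots> = chain_sum (Suc (Suc m)) n x"
    unfolding chain_sum_def
    using sum.reindex_bij_betw[OF bij_betw_case_nat_chains, of "chain_term (Suc (Suc m)) x"]
    by (simp add: case_prod_unfold)
  finally show ?thesis ..
qed

lemma binomial_pochhammer_sum_eq_chain_sum:
  fixes x :: real
  assumes "1 \<le> n" and "pochhammer (x - real (Suc m)) (m + n) \<noteq> 0"
  shows "binomial_pochhammer_sum (Suc m) n x = chain_sum (Suc m) n x"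
  using assms
proof (induction m arbitrary: n x)
  case 0
  then show ?case using binomial_pochhammer_sum_1[of n x] chain_sum_1[of n x] by simp
next
  case (Suc m)
  have "binomial_pochhammer_sum (Suc (Suc m)) n x
      = (\<Sum>k=1..n. binomial_pochhammer_sum (Suc m) k (x - 1) / (real k * (x + real k - 2)))"
    using Suc.prems(2) by (rule binomial_pochhammer_sum_Suc)
  also have "\<dots> = (\<Sum>k=1..n. chain_sum (Suc m) k (x - 1) / (real k * (x + real k - 2)))"
  proof (intro sum.cong refl)
    fix k assume k: "k \<in> {1..n}"
    then have "pochhammer (x - 1 - real (Suc m)) (m + k) \<noteq> 0"
      using pochhammer_neq_0_mono[OF Suc.prems(2), of "m + k"] by (simp add: algebra_simps)
    with k Suc.IH show "binomial_pochhammer_sum (Suc m) k (x - 1) / (real k * (x + real k - 2))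
        = chain_sum (Suc m) k (x - 1) / (real k * (x + real k - 2))"
      by simp
  qed
  also have "\<dots> = chain_sum (Suc (Suc m)) n x"
    by (rule chain_sum_Suc[symmetric])
  finally show ?case .
qed

theorem corollary5p2:
  fixes m n :: nat and x :: real
  assumes "m \<ge> 1" and "n \<ge> 1"
    and "\<forall>i < m + n - 1. x - real m + real i \<noteq> 0"
  shows "(\<Sum>k=1..n. real (n choose k) * pochhammer (real m - x) k * pochhammer (x - 1) (n - k)
            / (pochhammer (x - real m) (m + n - 1) * real k ^ m))
       = (\<Sum>k\<in>chains m n.
            ((\<Sum>j=1..<k (m - 1). 1 / (x + real j - real m)) - (\<Sum>j=1..k (m - 1). 1 / real j))
            / (\<Prod>i=1..<m. real (k i) * (x + real (k i) - real (i + 1))))"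
proof -
  obtain l where m: "m = Suc l" using assms(1) by (cases m) auto
  have "pochhammer (x - real m) (m + n - 1) \<noteq> 0"
    using assms(3) by (auto simp: pochhammer_eq_0_iff)
  then have "binomial_pochhammer_sum m n x = chain_sum m n x"
    using binomial_pochhammer_sum_eq_chain_sum[of n x l] assms(2) by (simp add: m)
  then show ?thesis by (simp add: binomial_pochhammer_sum_def chain_sum_def chain_term_def)
qed

end
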